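(* Let $\alpha \in (\frac12,1)$ have regular continued fraction expansion $\alpha = [1,a_1,a_2,a_3,\ldots]$. If $m := \min\{ i \ge 0 : T_\alpha^i(\alpha) \in D_\alpha^{\mathsf c}\}$ exists, then $m = a_1 + a_3 + \cdots + a_{2j+1} - 1$, where $j \ge 0$ is the unique integer such that \[ a_1+a_3+\cdots+a_{2j-1} - 1 < m \le a_1 + a_3 + \cdots + a_{2j+1} - 1. \] Similarly, if $k := \min\{ i \ge 0 : T_\alpha^i(1-\alpha) \in D_\alpha^{\mathsf c}\}$ exists, then $k = a_2+a_4+\cdots+a_{2j}-1$, where $j\ge1$ is the unique integer such that \[ a_2+a_4+\cdots+a_{2j-2}-1 < k \le a_2+a_4+\cdots+a_{2j}-1. \]
   Context: $[a_1,a_2,\ldots]$ denotes the regular continued fraction $\cfrac{1}{a_1+\cfrac{1}{a_2+\cdots}}$; empty sums are $0$. For $\alpha \in (0,1)$ let $D_\alpha = \bigcup_{n \ge 1} \big[ \frac{1}{n+\alpha}, \frac1n \big]$, $D_\alpha^{\mathsf c} = [0,1]\setminus D_\alpha$, $I_\alpha = [\min\{\alpha,1-\alpha\},1]$, and $T_\alpha : I_\alpha \to I_\alpha$, $T_\alpha(x) = \frac1x - \lfloor \frac1x \rfloor$ if $x \in D_\alpha^{\mathsf c}$, $T_\alpha(x) = 1 + \lfloor \frac1x \rfloor - \frac1x$ if $x \in D_\alpha$. *)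

theory Defs
  imports Complex_Main
begin

fun cfrac_list :: "nat list \<Rightarrow> real" where
  "cfrac_list [] = 0"
| "cfrac_list (b # bs) = 1 / (real b + cfrac_list bs)"

text \<open>alpha = [1, a_1, a_2, ...] (infinite regular continued fraction, a_i positive integers):
  the convergents [1, a_1, ..., a_n] tend to alpha.\<close>
definition cf_expansion_1 :: "real \<Rightarrow> (nat \<Rightarrow> nat) \<Rightarrow> bool" where
  "cf_expansion_1 x a \<longleftrightarrow> (\<forall>i\<ge>1. a i \<ge> 1) \<and>
     (\<lambda>n. cfrac_list (1 # map a [1..<Suc n])) \<longlonglongrightarrow> x"

definition D_alpha :: "real \<Rightarrow> real set" where
  "D_alpha \<alpha> = (\<Union>n\<in>{1::nat..}. {1 / (real n + \<alpha>) .. 1 / real n})"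

definition Dc_alpha :: "real \<Rightarrow> real set" where
  "Dc_alpha \<alpha> = {0..1} - D_alpha \<alpha>"

definition I_alpha :: "real \<Rightarrow> real set" where
  "I_alpha \<alpha> = {min \<alpha> (1 - \<alpha>) .. 1}"

definition T_alpha :: "real \<Rightarrow> real \<Rightarrow> real" where
  "T_alpha \<alpha> x = (if x \<in> D_alpha \<alpha> then 1 + real_of_int \<lfloor>1 / x\<rfloor> - 1 / x
                    else 1 / x - real_of_int \<lfloor>1 / x\<rfloor>)"

end

theory Submission
  imports Defs
begin

text \<open>Write \<open>\<theta>\<^sub>k = [a\<^sub>k, a\<^sub>k\<^sub>+\<^sub>1, ...]\<close>, so that \<open>\<alpha> = 1 - 1/(a\<^sub>1 + 1 + \<theta>\<^sub>2)\<close> and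
  \<open>1 - \<alpha> = 1 - 1/(1 + \<theta>\<^sub>1)\<close>. On a point \<open>1 - 1/(b + \<theta>\<^sub>k)\<close> of \<open>D_alpha \<alpha>\<close>, the map \<open>T_alpha \<alpha>\<close>
  lowers \<open>b\<close> by one if \<open>b \<ge> 2\<close> and gives \<open>1 - 1/(a\<^sub>k\<^sub>+\<^sub>1 + \<theta>\<^sub>k\<^sub>+\<^sub>2)\<close> if \<open>b = 1\<close>. So the orbit
  of \<open>\<alpha>\<close> runs down through blocks of lengths \<open>a\<^sub>1, a\<^sub>3, a\<^sub>5, ...\<close>, and that of \<open>1 - \<alpha>\<close> through
  blocks of lengths \<open>a\<^sub>2, a\<^sub>4, ...\<close>. As \<open>\<alpha> > 1/2\<close>, the orbit can leave \<open>D_alpha \<alpha>\<close> only where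
  \<open>b \<le> 2\<close>: at \<open>b = 2\<close>, the last step of a block, or at \<open>b = 1\<close>, which forces the next block to
  have length \<open>a\<^sub>k\<^sub>+\<^sub>1 = 1\<close>. In both cases the hitting time plus one is a partial sum of the
  block lengths.\<close>

lemma inverse_in_D_alpha_iff:
  fixes \<alpha> u :: real and n :: nat
  assumes "0 < \<alpha>" "\<alpha> < 1" "1 \<le> n" "0 \<le> u" "u < 1"
  shows "1 / (real n + u) \<in> D_alpha \<alpha> \<longleftrightarrow> u \<le> \<alpha>"
proof
  assume "1 / (real n + u) \<in> D_alpha \<alpha>"
  then obtain m :: nat where "1 \<le> m" and lower: "1 / (real m + \<alpha>) \<le> 1 / (real n + u)"
    and upper: "1 / (real n + u) \<le> 1 / real m"
    unfolding D_alpha_def by auto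
  have "real n + u \<le> real m + \<alpha>"
    using lower assms \<open>1 \<le> m\<close> by (simp add: divide_simps)
  moreover have "real m \<le> real n + u"
    using upper assms \<open>1 \<le> m\<close> by (simp add: divide_simps)
  ultimately have "m = n"
    using assms by linarith
  with \<open>real n + u \<le> real m + \<alpha>\<close> show "u \<le> \<alpha>"
    by simp
next
  assume "u \<le> \<alpha>"
  then have "1 / (real n + \<alpha>) \<le> 1 / (real n + u)" "1 / (real n + u) \<le> 1 / real n"
    using assms by (simp_all add: frac_le)
  then show "1 / (real n + u) \<in> D_alpha \<alpha>"
    unfolding D_alpha_def using assms(3) by auto
qed

lemma inverse_in_Dc_alpha_iff:
  fixes \<alpha> u :: real and n :: nat
  assumes "0 < \<alpha>" "\<alpha> < 1" "1 \<le> n" "0 \<le> u" "u < 1"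
  shows "1 / (real n + u) \<in> Dc_alpha \<alpha> \<longleftrightarrow> \<alpha> < u"
proof -
  have "1 / (real n + u) \<in> {0..1}"
    using assms by simp
  then show ?thesis
    unfolding Dc_alpha_def using inverse_in_D_alpha_iff[OF assms] by auto
qed

lemma T_alpha_inverse:
  fixes \<alpha> u :: real and n :: nat
  assumes "0 < \<alpha>" "\<alpha> < 1" "1 \<le> n" "0 \<le> u" "u < 1" "u \<le> \<alpha>"
  shows "T_alpha \<alpha> (1 / (real n + u)) = 1 - u"
proof -
  have "\<lfloor>real n + u\<rfloor> = int n"
    using assms by (simp add: floor_eq_iff)
  then show ?thesis
    unfolding T_alpha_def using inverse_in_D_alpha_iff[OF assms(1-5)] assms(6) by simp
qed

definition cf_tails :: "(nat \<Rightarrow> nat) \<Rightarrow> (nat \<Rightarrow> real) \<Rightarrow> bool" where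
  "cf_tails a \<theta> \<longleftrightarrow>
     (\<forall>k. 1 \<le> a k \<and> 0 < \<theta> k \<and> \<theta> k < 1 \<and> \<theta> k = 1 / (real (a k) + \<theta> (Suc k)))"

lemma cf_tailsD:
  assumes "cf_tails a \<theta>"
  shows "1 \<le> a k" "0 < \<theta> k" "\<theta> k < 1" "\<theta> k = 1 / (real (a k) + \<theta> (Suc k))"
  using assms unfolding cf_tails_def by blast+

lemma cfrac_list_bounds:
  assumes "\<forall>x\<in>set xs. 1 \<le> x"
  shows "0 \<le> cfrac_list xs" "cfrac_list xs \<le> 1"
  using assms by (induction xs) auto

lemma cfrac_list_map_upt:
  assumes "k < n"
  shows "cfrac_list (map b [k..<n]) = 1 / (real (b k) + cfrac_list (map b [Suc k..<n]))"
  using assms by (simp add: upt_conv_Cons)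

lemma tendsto_cfrac_list_tail:
  assumes "\<forall>i. 1 \<le> b i" and lim: "(\<lambda>n. cfrac_list (map b [k..<n])) \<longlonglongrightarrow> x"
  shows "1 / (real (b k) + 1) \<le> x" and "(\<lambda>n. cfrac_list (map b [Suc k..<n])) \<longlonglongrightarrow> 1 / x - real (b k)"
proof -
  have bounds: "0 \<le> cfrac_list (map b [j..<n])" "cfrac_list (map b [j..<n]) \<le> 1" for j n
    using cfrac_list_bounds[of "map b [j..<n]"] assms(1) by auto
  have "1 \<le> real (b k)"
    using assms(1) by simp
  then have denom: "0 < real (b k) + cfrac_list (map b [Suc k..<n])"
    "real (b k) + cfrac_list (map b [Suc k..<n]) \<le> real (b k) + 1" for n
    using bounds[of "Suc k" n] by linarith+
  have "eventually (\<lambda>n. 1 / (real (b k) + 1) \<le> cfrac_list (map b [k..<n])) sequentially"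
    using eventually_gt_at_top[of k]
    by eventually_elim (use denom in \<open>simp add: cfrac_list_map_upt frac_le\<close>)
  then show "1 / (real (b k) + 1) \<le> x"
    by (rule tendsto_lowerbound[OF lim]) simp
  have "0 < 1 / (real (b k) + 1)"
    by simp
  with \<open>1 / (real (b k) + 1) \<le> x\<close> have "x \<noteq> 0"
    by linarith
  then have "(\<lambda>n. 1 / cfrac_list (map b [k..<n]) - real (b k)) \<longlonglongrightarrow> 1 / x - real (b k)"
    by (intro tendsto_intros lim)
  moreover have "eventually (\<lambda>n. 1 / cfrac_list (map b [k..<n]) - real (b k) =
      cfrac_list (map b [Suc k..<n])) sequentially"
    using eventually_gt_at_top[of k]
    by eventually_elim (use denom in \<open>simp add: cfrac_list_map_upt\<close>)
  ultimately show "(\<lambda>n. cfrac_list (map b [Suc k..<n])) \<longlonglongrightarrow> 1 / x - real (b k)"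
    by (rule Lim_transform_eventually)
qed

lemma cf_tails_exist:
  assumes b: "\<forall>i. 1 \<le> b i" and lim: "(\<lambda>n. cfrac_list (map b [0..<n])) \<longlonglongrightarrow> x"
  shows "\<exists>\<theta>. cf_tails b \<theta> \<and> \<theta> 0 = x"
proof -
  define \<theta> where "\<theta> = rec_nat x (\<lambda>k t. 1 / t - real (b k))"
  have \<theta>_Suc: "\<theta> (Suc k) = 1 / \<theta> k - real (b k)" for k
    by (simp add: \<theta>_def)
  have conv: "(\<lambda>n. cfrac_list (map b [k..<n])) \<longlonglongrightarrow> \<theta> k" for k
  proof (induction k)
    case 0
    show ?case
      using lim by (simp add: \<theta>_def)
  next
    case (Suc k)
    show ?case
      unfolding \<theta>_Suc by (rule tendsto_cfrac_list_tail(2)[OF b Suc.IH])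
  qed
  have pos: "0 < \<theta> k" for k
    using tendsto_cfrac_list_tail(1)[OF b conv, of k] divide_pos_pos[of 1 "real (b k) + 1"] by linarith
  have rec: "\<theta> k = 1 / (real (b k) + \<theta> (Suc k))" for k
    using pos[of k] by (simp add: \<theta>_Suc)
  have "\<theta> k < 1" for k
  proof -
    have "1 < real (b k) + \<theta> (Suc k)"
      using pos[of "Suc k"] b[rule_format, of k] by linarith
    then show ?thesis
      using rec[of k] by simp
  qed
  then have "cf_tails b \<theta>"
    unfolding cf_tails_def using b pos rec by blast
  then show ?thesis
    by (auto simp: \<theta>_def)
qed

text \<open>\<open>cf_expansion_1\<close> does not constrain \<open>a 0\<close>; setting it to the leading partial quotient \<open>1\<close>
  makes \<open>\<alpha>\<close> the tail \<open>\<theta> 0\<close>.\<close>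
lemma cf_expansion_1_tails:
  assumes "cf_expansion_1 \<alpha> a"
  shows "\<exists>\<theta>. cf_tails (a(0 := 1)) \<theta> \<and> \<theta> 0 = \<alpha>"
proof (rule cf_tails_exist)
  show "\<forall>i. 1 \<le> (a(0 := 1)) i"
    using assms unfolding cf_expansion_1_def by simp
  have "map (a(0 := 1)) [0..<Suc n] = 1 # map a [1..<Suc n]" for n
    by (simp only: upt_conv_Cons[OF zero_less_Suc] list.map) (simp add: map_upt_eqI)
  then have "(\<lambda>n. cfrac_list (map (a(0 := 1)) [0..<Suc n])) \<longlonglongrightarrow> \<alpha>"
    using assms unfolding cf_expansion_1_def by simp
  then show "(\<lambda>n. cfrac_list (map (a(0 := 1)) [0..<n])) \<longlonglongrightarrow> \<alpha>"
    by (rule LIMSEQ_imp_Suc)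
qed

definition cf_compl :: "nat \<Rightarrow> real \<Rightarrow> real" where
  "cf_compl b t = 1 - 1 / (real b + t)"

lemma cf_compl_Suc:
  assumes "0 < real b + t"
  shows "cf_compl (Suc b) t = 1 / (1 + 1 / (real b + t))"
  using assms unfolding cf_compl_def by (simp add: field_simps)

lemma cf_compl_Suc_in_Dc_alpha_iff:
  assumes "0 < \<alpha>" "\<alpha> < 1" "1 \<le> b" "0 < t"
  shows "cf_compl (Suc b) t \<in> Dc_alpha \<alpha> \<longleftrightarrow> \<alpha> < 1 / (real b + t)"
  using inverse_in_Dc_alpha_iff[of \<alpha> 1 "1 / (real b + t)"] cf_compl_Suc[of b t] assms
  by simp

lemma T_alpha_cf_compl_Suc:
  assumes "0 < \<alpha>" "\<alpha> < 1" "1 \<le> b" "0 < t" "cf_compl (Suc b) t \<notin> Dc_alpha \<alpha>"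
  shows "T_alpha \<alpha> (cf_compl (Suc b) t) = cf_compl b t"
  using T_alpha_inverse[of \<alpha> 1 "1 / (real b + t)"] cf_compl_Suc[of b t]
    cf_compl_Suc_in_Dc_alpha_iff[OF assms(1-4)] assms
  by (simp add: cf_compl_def)

lemma cf_compl_not_in_Dc_alpha:
  assumes "1/2 < \<alpha>" "\<alpha> < 1" "3 \<le> b" "0 < t"
  shows "cf_compl b t \<notin> Dc_alpha \<alpha>"
proof -
  obtain b' where b: "b = Suc b'" "2 \<le> b'"
    using assms(3) by (metis Suc_le_D Suc_le_mono numeral_3_eq_3 numeral_2_eq_2)
  have "1 / (real b' + t) \<le> 1 / 2"
    using b assms(4) by (simp add: frac_le)
  moreover have "cf_compl b t \<in> Dc_alpha \<alpha> \<longleftrightarrow> \<alpha> < 1 / (real b' + t)"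
    using cf_compl_Suc_in_Dc_alpha_iff[of \<alpha> b' t] b assms by simp
  ultimately show ?thesis
    using assms(1) by linarith
qed

lemma cf_compl_Suc_tail:
  assumes "cf_tails a \<theta>"
  shows "cf_compl (Suc (a k)) (\<theta> (Suc k)) = 1 / (1 + \<theta> k)"
  using cf_compl_Suc[of "a k" "\<theta> (Suc k)"] cf_tailsD[OF assms, of k] cf_tailsD(2)[OF assms, of "Suc k"]
  by simp

lemma cf_compl_one_tail:
  assumes "cf_tails a \<theta>"
  shows "cf_compl 1 (\<theta> k) = 1 / (real (Suc (a k)) + \<theta> (Suc k))"
proof -
  have "0 < real (a k) + \<theta> (Suc k)"
    using cf_tailsD(2)[OF assms, of "Suc k"] by linarith
  then show ?thesis
    unfolding cf_compl_def cf_tailsD(4)[OF assms, of k] by (simp add: field_simps)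
qed

lemma cf_compl_one_in_Dc_alpha_iff:
  assumes "cf_tails a \<theta>" "0 < \<alpha>" "\<alpha> < 1"
  shows "cf_compl 1 (\<theta> k) \<in> Dc_alpha \<alpha> \<longleftrightarrow> \<alpha> < \<theta> (Suc k)"
  using inverse_in_Dc_alpha_iff[of \<alpha> "Suc (a k)" "\<theta> (Suc k)"] assms
    cf_tailsD(2,3)[OF assms(1), of "Suc k"]
  unfolding cf_compl_one_tail[OF assms(1)] by simp

lemma T_alpha_cf_compl_one:
  assumes "cf_tails a \<theta>" "0 < \<alpha>" "\<alpha> < 1" "cf_compl 1 (\<theta> k) \<notin> Dc_alpha \<alpha>"
  shows "T_alpha \<alpha> (cf_compl 1 (\<theta> k)) = cf_compl (a (Suc k)) (\<theta> (Suc (Suc k)))"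
proof -
  have "T_alpha \<alpha> (cf_compl 1 (\<theta> k)) = 1 - \<theta> (Suc k)"
    using T_alpha_inverse[of \<alpha> "Suc (a k)" "\<theta> (Suc k)"] assms
      cf_compl_one_in_Dc_alpha_iff[OF assms(1-3)] cf_tailsD(2,3)[OF assms(1), of "Suc k"]
    unfolding cf_compl_one_tail[OF assms(1)] by simp
  also have "\<dots> = cf_compl (a (Suc k)) (\<theta> (Suc (Suc k)))"
    unfolding cf_compl_def cf_tailsD(4)[OF assms(1), of "Suc k"] ..
  finally show ?thesis .
qed

lemma cf_compl_one_in_Dc_alpha_imp_one:
  assumes "cf_tails a \<theta>" "1/2 < \<alpha>" "\<alpha> < 1" "cf_compl 1 (\<theta> k) \<in> Dc_alpha \<alpha>"
  shows "a (Suc k) = 1"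
proof (rule ccontr)
  assume "a (Suc k) \<noteq> 1"
  with cf_tailsD(1)[OF assms(1), of "Suc k"] have "2 \<le> a (Suc k)"
    by linarith
  with cf_tailsD(2)[OF assms(1), of "Suc (Suc k)"]
  have "2 \<le> real (a (Suc k)) + \<theta> (Suc (Suc k))"
    by linarith
  then have "\<theta> (Suc k) \<le> 1/2"
    unfolding cf_tailsD(4)[OF assms(1), of "Suc k"] by (simp add: frac_le)
  then show False
    using cf_compl_one_in_Dc_alpha_iff[of a \<theta> \<alpha> k] assms by linarith
qed

lemma cf_compl_orbit:
  assumes tails: "cf_tails a \<theta>" and "0 < \<alpha>" "\<alpha> < 1"
    and start: "x\<^sub>0 = cf_compl c\<^sub>0 (\<theta> p)" "1 \<le> c\<^sub>0"
    and "\<forall>i<n. (T_alpha \<alpha> ^^ i) x\<^sub>0 \<notin> Dc_alpha \<alpha>"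
  shows "\<exists>j c. (T_alpha \<alpha> ^^ n) x\<^sub>0 = cf_compl c (\<theta> (p + 2*j)) \<and> 1 \<le> c \<and>
           n + c = c\<^sub>0 + (\<Sum>i\<in>{1..j}. a (p + 2*i - 1))"
  using assms(6)
proof (induction n)
  case 0
  show ?case
    using start by (intro exI[of _ 0] exI[of _ c\<^sub>0]) simp
next
  case (Suc n)
  then obtain j c where orbit: "(T_alpha \<alpha> ^^ n) x\<^sub>0 = cf_compl c (\<theta> (p + 2*j))"
    and "1 \<le> c" and time: "n + c = c\<^sub>0 + (\<Sum>i\<in>{1..j}. a (p + 2*i - 1))"
    by auto
  have not_Dc: "cf_compl c (\<theta> (p + 2*j)) \<notin> Dc_alpha \<alpha>"
    using Suc.prems orbit by (metis lessI)
  show ?case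
  proof (cases "c = 1")
    case True
    have "(T_alpha \<alpha> ^^ Suc n) x\<^sub>0 = cf_compl (a (Suc (p + 2*j))) (\<theta> (p + 2 * Suc j))"
      using T_alpha_cf_compl_one[OF tails assms(2,3), of "p + 2*j"] not_Dc orbit True by simp
    moreover have "Suc n + a (Suc (p + 2*j)) = c\<^sub>0 + (\<Sum>i\<in>{1..Suc j}. a (p + 2*i - 1))"
      using time True by simp
    ultimately show ?thesis
      using cf_tailsD(1)[OF tails] by blast
  next
    case False
    then obtain c' where c: "c = Suc c'" "1 \<le> c'"
      using \<open>1 \<le> c\<close> by (cases c) auto
    have "(T_alpha \<alpha> ^^ Suc n) x\<^sub>0 = cf_compl c' (\<theta> (p + 2*j))"
      using T_alpha_cf_compl_Suc[OF assms(2,3) c(2) cf_tailsD(2)[OF tails]] not_Dc orbit c(1)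
      by simp
    then show ?thesis
      using time c by (intro exI[of _ j] exI[of _ c']) simp
  qed
qed

lemma cf_compl_first_hit:
  assumes tails: "cf_tails a \<theta>" and "1/2 < \<alpha>" "\<alpha> < 1"
    and start: "x\<^sub>0 = cf_compl c\<^sub>0 (\<theta> p)" "1 \<le> c\<^sub>0"
    and "\<exists>i. (T_alpha \<alpha> ^^ i) x\<^sub>0 \<in> Dc_alpha \<alpha>"
  shows "\<exists>j. (LEAST i. (T_alpha \<alpha> ^^ i) x\<^sub>0 \<in> Dc_alpha \<alpha>) + 2 =
           c\<^sub>0 + (\<Sum>i\<in>{1..j}. a (p + 2*i - 1))"
proof -
  define n where "n = (LEAST i. (T_alpha \<alpha> ^^ i) x\<^sub>0 \<in> Dc_alpha \<alpha>)"
  have hit: "(T_alpha \<alpha> ^^ n) x\<^sub>0 \<in> Dc_alpha \<alpha>"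
    unfolding n_def using assms(6) by (rule LeastI_ex)
  have "0 < \<alpha>"
    using assms(2) by linarith
  moreover have "\<forall>i<n. (T_alpha \<alpha> ^^ i) x\<^sub>0 \<notin> Dc_alpha \<alpha>"
    unfolding n_def using not_less_Least by blast
  ultimately obtain j c where orbit: "(T_alpha \<alpha> ^^ n) x\<^sub>0 = cf_compl c (\<theta> (p + 2*j))"
    and "1 \<le> c" and time: "n + c = c\<^sub>0 + (\<Sum>i\<in>{1..j}. a (p + 2*i - 1))"
    using cf_compl_orbit[OF tails _ assms(3) start] by blast
  have "\<not> 3 \<le> c"
    using cf_compl_not_in_Dc_alpha[OF assms(2,3) _ cf_tailsD(2)[OF tails], of c "p + 2*j"] hit orbit
    by auto
  with \<open>1 \<le> c\<close> consider "c = 2" | "c = 1"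
    by linarith
  then show ?thesis
  proof cases
    case 1
    then show ?thesis
      using time unfolding n_def by auto
  next
    case 2
    then have "a (Suc (p + 2*j)) = 1"
      using cf_compl_one_in_Dc_alpha_imp_one[OF tails assms(2,3)] hit orbit by simp
    then show ?thesis
      using time 2 unfolding n_def by (intro exI[of _ "Suc j"]) simp
  qed
qed

lemma mono_bracket_unique:
  fixes S :: "nat \<Rightarrow> nat"
  assumes "mono S" "S j \<le> m" "m < S (Suc j)" "S j' \<le> m" "m < S (Suc j')"
  shows "j = j'"
proof (rule ccontr)
  assume "j \<noteq> j'"
  then consider "Suc j \<le> j'" | "Suc j' \<le> j"
    by linarith
  then show False
  proof cases
    case 1
    then have "S (Suc j) \<le> S j'"
      by (rule monoD[OF assms(1)])
    with assms show False
      by linarith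
  next
    case 2
    then have "S (Suc j') \<le> S j"
      by (rule monoD[OF assms(1)])
    with assms show False
      by linarith
  qed
qed

lemma mono_bracket_ex1:
  fixes S :: "nat \<Rightarrow> nat"
  assumes "mono S" "S j\<^sub>0 < S (Suc j\<^sub>0)" "S (Suc j\<^sub>0) = Suc m"
  shows "(\<exists>!j. int (S j) - 1 < int m \<and> int m \<le> int (S (Suc j)) - 1) \<and>
    (\<forall>j. int (S j) - 1 < int m \<and> int m \<le> int (S (Suc j)) - 1 \<longrightarrow> int m = int (S (Suc j)) - 1)"
proof -
  have bracket_iff: "int (S j) - 1 < int m \<and> int m \<le> int (S (Suc j)) - 1 \<longleftrightarrow>
      S j \<le> m \<and> m < S (Suc j)" for j
    by linarith
  have bracket_j\<^sub>0: "S j\<^sub>0 \<le> m \<and> m < S (Suc j\<^sub>0)"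
    using assms(2,3) by simp
  have "j = j\<^sub>0" if "S j \<le> m \<and> m < S (Suc j)" for j
    using mono_bracket_unique[OF assms(1)] that bracket_j\<^sub>0 by blast
  then show ?thesis
    unfolding bracket_iff using bracket_j\<^sub>0 assms(3) by auto
qed

lemma partial_sum_bracket_ex1:
  fixes c :: "nat \<Rightarrow> nat"
  assumes "Suc m = (\<Sum>i<Suc j\<^sub>0. c i)" "0 < c j\<^sub>0"
  shows "(\<exists>!j. int (\<Sum>i<j. c i) - 1 < int m \<and> int m \<le> int (\<Sum>i<Suc j. c i) - 1) \<and>
    (\<forall>j. int (\<Sum>i<j. c i) - 1 < int m \<and> int m \<le> int (\<Sum>i<Suc j. c i) - 1 \<longrightarrow>
      int m = int (\<Sum>i<Suc j. c i) - 1)"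
proof (rule mono_bracket_ex1[where S = "\<lambda>j. \<Sum>i<j. c i"])
  show "mono (\<lambda>j. \<Sum>i<j. c i)"
    by (intro monoI sum_mono2) auto
  show "(\<Sum>i<j\<^sub>0. c i) < (\<Sum>i<Suc j\<^sub>0. c i)"
    using assms(2) by simp
qed (use assms(1) in simp)

lemma partial_sum_from_one_bracket_ex1:
  fixes c :: "nat \<Rightarrow> nat"
  assumes "Suc m = (\<Sum>i\<in>{1..j\<^sub>0}. c i)" "0 < c j\<^sub>0"
  shows "(\<exists>!j. 1 \<le> j \<and> int (\<Sum>i\<in>{1..<j}. c i) - 1 < int m \<and> int m \<le> int (\<Sum>i\<in>{1..j}. c i) - 1) \<and>
    (\<forall>j. 1 \<le> j \<and> int (\<Sum>i\<in>{1..<j}. c i) - 1 < int m \<and> int m \<le> int (\<Sum>i\<in>{1..j}. c i) - 1 \<longrightarrow>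
      int m = int (\<Sum>i\<in>{1..j}. c i) - 1)"
proof -
  define S where "S j = (\<Sum>i\<in>{1..<j}. c i)" for j
  have S_Suc: "(\<Sum>i\<in>{1..j}. c i) = S (Suc j)" for j
    by (simp add: S_def atLeastLessThanSuc_atLeastAtMost)
  have "1 \<le> j\<^sub>0"
    using assms(1) by (cases j\<^sub>0) auto
  have "mono S"
    unfolding S_def by (intro monoI sum_mono2) auto
  moreover have "S j\<^sub>0 < S (Suc j\<^sub>0)"
    using \<open>1 \<le> j\<^sub>0\<close> assms(2) by (simp add: S_def)
  moreover have "S (Suc j\<^sub>0) = Suc m"
    using assms(1) S_Suc by simp
  moreover have "1 \<le> j" if "int m \<le> int (S (Suc j)) - 1" for j
    using that by (cases j) (auto simp: S_def)
  ultimately show ?thesis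
    unfolding S_Suc S_def[symmetric] using mono_bracket_ex1[of S j\<^sub>0 m] by blast
qed

lemma first_hit_alpha:
  assumes "1/2 < \<alpha>" "\<alpha> < 1" "cf_expansion_1 \<alpha> a" "\<exists>i. (T_alpha \<alpha> ^^ i) \<alpha> \<in> Dc_alpha \<alpha>"
  shows "\<exists>j. Suc (LEAST i. (T_alpha \<alpha> ^^ i) \<alpha> \<in> Dc_alpha \<alpha>) = (\<Sum>i<Suc j. a (2*i+1))"
proof -
  obtain \<theta> where tails: "cf_tails (a(0 := 1)) \<theta>" and "\<theta> 0 = \<alpha>"
    using cf_expansion_1_tails[OF assms(3)] by blast
  then have start: "\<alpha> = cf_compl (Suc (a 1)) (\<theta> 2)"
    using cf_compl_Suc_tail[OF tails, of 1] cf_tailsD(4)[OF tails, of 0] by (simp add: numeral_2_eq_2)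
  obtain j where j: "(LEAST i. (T_alpha \<alpha> ^^ i) \<alpha> \<in> Dc_alpha \<alpha>) + 2 =
      Suc (a 1) + (\<Sum>i\<in>{1..j}. (a(0 := 1)) (2 + 2*i - 1))"
    using cf_compl_first_hit[OF tails assms(1,2) start _ assms(4)] by auto
  have "(\<Sum>i\<in>{1..j}. (a(0 := 1)) (2 + 2*i - 1)) = (\<Sum>i<j. a (2 * Suc i + 1))"
    by (simp add: sum.atLeast1_atMost_eq)
  moreover have "(\<Sum>i<Suc j. a (2*i+1)) = a 1 + (\<Sum>i<j. a (2 * Suc i + 1))"
    using sum.lessThan_Suc_shift[of "\<lambda>i. a (2*i+1)" j] by simp
  ultimately show ?thesis
    using j by (intro exI[of _ j]) simp
qed

lemma first_hit_one_minus_alpha: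
  assumes "1/2 < \<alpha>" "\<alpha> < 1" "cf_expansion_1 \<alpha> a" "\<exists>i. (T_alpha \<alpha> ^^ i) (1 - \<alpha>) \<in> Dc_alpha \<alpha>"
  shows "\<exists>j\<ge>1. Suc (LEAST i. (T_alpha \<alpha> ^^ i) (1 - \<alpha>) \<in> Dc_alpha \<alpha>) = (\<Sum>i\<in>{1..j}. a (2*i))"
proof -
  obtain \<theta> where tails: "cf_tails (a(0 := 1)) \<theta>" and "\<theta> 0 = \<alpha>"
    using cf_expansion_1_tails[OF assms(3)] by blast
  then have start: "1 - \<alpha> = cf_compl 1 (\<theta> 1)"
    using cf_tailsD(4)[OF tails, of 0] by (simp add: cf_compl_def)
  obtain j where j: "(LEAST i. (T_alpha \<alpha> ^^ i) (1 - \<alpha>) \<in> Dc_alpha \<alpha>) + 2 =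
      1 + (\<Sum>i\<in>{1..j}. (a(0 := 1)) (1 + 2*i - 1))"
    using cf_compl_first_hit[OF tails assms(1,2) start _ assms(4)] by auto
  have "(\<Sum>i\<in>{1..j}. (a(0 := 1)) (1 + 2*i - 1)) = (\<Sum>i\<in>{1..j}. a (2*i))"
    by (rule sum.cong) auto
  moreover have "1 \<le> j"
    using j by (cases j) auto
  ultimately show ?thesis
    using j by auto
qed

theorem lemma3p4:
  fixes \<alpha> :: real and a :: "nat \<Rightarrow> nat"
  assumes "1/2 < \<alpha>" and "\<alpha> < 1"
    and "cf_expansion_1 \<alpha> a"
  shows "((\<exists>i. (T_alpha \<alpha> ^^ i) \<alpha> \<in> Dc_alpha \<alpha>) \<longrightarrow>
           (let m = (LEAST i. (T_alpha \<alpha> ^^ i) \<alpha> \<in> Dc_alpha \<alpha>);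
                P = (\<lambda>j::nat. int (\<Sum>i<j. a (2*i+1)) - 1 < int m \<and>
                              int m \<le> int (\<Sum>i<Suc j. a (2*i+1)) - 1)
            in (\<exists>!j. P j) \<and> (\<forall>j. P j \<longrightarrow> int m = int (\<Sum>i<Suc j. a (2*i+1)) - 1)))
       \<and> ((\<exists>i. (T_alpha \<alpha> ^^ i) (1 - \<alpha>) \<in> Dc_alpha \<alpha>) \<longrightarrow>
           (let k = (LEAST i. (T_alpha \<alpha> ^^ i) (1 - \<alpha>) \<in> Dc_alpha \<alpha>);
                Q = (\<lambda>j::nat. 1 \<le> j \<and> int (\<Sum>i\<in>{1..<j}. a (2*i)) - 1 < int k \<and>
                              int k \<le> int (\<Sum>i\<in>{1..j}. a (2*i)) - 1)
            in (\<exists>!j. Q j) \<and> (\<forall>j. Q j \<longrightarrow> int k = int (\<Sum>i\<in>{1..j}. a (2*i)) - 1)))"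
proof -
  have pos: "0 < a i" if "1 \<le> i" for i
    using assms(3) that unfolding cf_expansion_1_def by fastforce
  show ?thesis
  proof (intro conjI impI)
    assume "\<exists>i. (T_alpha \<alpha> ^^ i) \<alpha> \<in> Dc_alpha \<alpha>"
    then obtain j where "Suc (LEAST i. (T_alpha \<alpha> ^^ i) \<alpha> \<in> Dc_alpha \<alpha>) = (\<Sum>i<Suc j. a (2*i+1))"
      using first_hit_alpha[OF assms] by blast
    then show "let m = (LEAST i. (T_alpha \<alpha> ^^ i) \<alpha> \<in> Dc_alpha \<alpha>);
                P = (\<lambda>j::nat. int (\<Sum>i<j. a (2*i+1)) - 1 < int m \<and>
                              int m \<le> int (\<Sum>i<Suc j. a (2*i+1)) - 1)
            in (\<exists>!j. P j) \<and> (\<forall>j. P j \<longrightarrow> int m = int (\<Sum>i<Suc j. a (2*i+1)) - 1)"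
      unfolding Let_def by (rule partial_sum_bracket_ex1) (simp add: pos)
  next
    assume "\<exists>i. (T_alpha \<alpha> ^^ i) (1 - \<alpha>) \<in> Dc_alpha \<alpha>"
    then obtain j where "1 \<le> j"
      and "Suc (LEAST i. (T_alpha \<alpha> ^^ i) (1 - \<alpha>) \<in> Dc_alpha \<alpha>) = (\<Sum>i\<in>{1..j}. a (2*i))"
      using first_hit_one_minus_alpha[OF assms] by blast
    then show "let k = (LEAST i. (T_alpha \<alpha> ^^ i) (1 - \<alpha>) \<in> Dc_alpha \<alpha>);
                Q = (\<lambda>j::nat. 1 \<le> j \<and> int (\<Sum>i\<in>{1..<j}. a (2*i)) - 1 < int k \<and>
                              int k \<le> int (\<Sum>i\<in>{1..j}. a (2*i)) - 1)
            in (\<exists>!j. Q j) \<and> (\<forall>j. Q j \<longrightarrow> int k = int (\<Sum>i\<in>{1..j}. a (2*i)) - 1)"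
      unfolding Let_def using pos[of "2*j"] by (intro partial_sum_from_one_bracket_ex1) simp_all
  qed
qed

end
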